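(* Let $K\subset\mathbb R^m$ be compact, let $B$ be a linear subspace of $C(K)$ such that $B=B_{\mathbb R}+iB_{\mathbb R}$ where $B_{\mathbb R}:=B\cap C_{\mathbb R}(K)$ (i.e., $B$ has a basis of real-valued functions). Let $L$ be a bounded linear operator on $B$ with $L:B\to C(K)$ and $L(B_{\mathbb R})\subseteq C_{\mathbb R}(K)$, and let $\|\cdot\|$ be a monotone norm on $B$ (i.e., $g,h\in B$ and $|g(x)|\le|h(x)|$ for all $x\in K$ imply $\|g\|\le\|h\|$). Then $$\sup_{h\in B\setminus\{0\}}\frac{\|L(h)\|_{C(K)}}{\|h\|}=\sup_{g\in B_{\mathbb R}\setminus\{0\}}\frac{\|L(g)\|_{C_{\mathbb R}(K)}}{\|g\|}.$$
   Context: $C(K)$ is the space of continuous complex-valued functions on $K$ with the maximum norm, $C_{\mathbb R}(K)$ its subspace of real-valued functions. *)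

theory Defs
  imports "HOL-Analysis.Analysis"
begin

text \<open>Elements of C(K) are represented as functions 'a => complex that are continuous
on K and vanish outside K (so that equality of functions is equality on K).\<close>

definition CK :: "'a::topological_space set \<Rightarrow> ('a \<Rightarrow> complex) set" where
  "CK K = {f. continuous_on K f \<and> (\<forall>x. x \<notin> K \<longrightarrow> f x = 0)}"

definition CRK :: "'a::topological_space set \<Rightarrow> ('a \<Rightarrow> complex) set" where
  "CRK K = {f \<in> CK K. \<forall>x. Im (f x) = 0}"

definition supnorm :: "'a set \<Rightarrow> ('a \<Rightarrow> complex) \<Rightarrow> real" where
  "supnorm K f = (SUP x\<in>K. cmod (f x))"

definition real_part_space :: "('a \<Rightarrow> complex) set \<Rightarrow> ('a \<Rightarrow> complex) set" where
  "real_part_space B = {f \<in> B. \<forall>x. Im (f x) = 0}"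

definition complex_subspace :: "('a \<Rightarrow> complex) set \<Rightarrow> bool" where
  "complex_subspace B \<longleftrightarrow> (\<lambda>x. 0) \<in> B \<and> (\<forall>f\<in>B. \<forall>g\<in>B. (\<lambda>x. f x + g x) \<in> B)
     \<and> (\<forall>c::complex. \<forall>f\<in>B. (\<lambda>x. c * f x) \<in> B)"

definition complex_linear_on :: "('a \<Rightarrow> complex) set \<Rightarrow> (('a \<Rightarrow> complex) \<Rightarrow> ('a \<Rightarrow> complex)) \<Rightarrow> bool" where
  "complex_linear_on B L \<longleftrightarrow> (\<forall>f\<in>B. \<forall>g\<in>B. L (\<lambda>x. f x + g x) = (\<lambda>x. L f x + L g x))
     \<and> (\<forall>c::complex. \<forall>f\<in>B. L (\<lambda>x. c * f x) = (\<lambda>x. c * L f x))"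

definition norm_on :: "('a \<Rightarrow> complex) set \<Rightarrow> (('a \<Rightarrow> complex) \<Rightarrow> real) \<Rightarrow> bool" where
  "norm_on B N \<longleftrightarrow> (\<forall>f\<in>B. N f \<ge> 0) \<and> (\<forall>f\<in>B. N f = 0 \<longleftrightarrow> f = (\<lambda>x. 0))
     \<and> (\<forall>c::complex. \<forall>f\<in>B. N (\<lambda>x. c * f x) = cmod c * N f)
     \<and> (\<forall>f\<in>B. \<forall>g\<in>B. N (\<lambda>x. f x + g x) \<le> N f + N g)"

definition monotone_norm_on :: "'a set \<Rightarrow> ('a \<Rightarrow> complex) set \<Rightarrow> (('a \<Rightarrow> complex) \<Rightarrow> real) \<Rightarrow> bool" where
  "monotone_norm_on K B N \<longleftrightarrow> norm_on B N \<and>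
     (\<forall>g\<in>B. \<forall>h\<in>B. (\<forall>x\<in>K. cmod (g x) \<le> cmod (h x)) \<longrightarrow> N g \<le> N h)"

end

theory Submission
  imports Defs
begin

text \<open>Write \<open>h = g\<^sub>1 + i g\<^sub>2\<close> with real-valued \<open>g\<^sub>1, g\<^sub>2 \<in> B\<^sub>\<real>\<close>. At a point \<open>x\<close>, rotating \<open>h\<close> by
  \<open>\<omega> = sgn (L h x)\<close> and taking the real part gives \<open>g = Re \<omega> g\<^sub>1 + Im \<omega> g\<^sub>2 \<in> B\<^sub>\<real>\<close> with
  \<open>|g| \<le> |h|\<close> pointwise, hence \<open>\<parallel>g\<parallel> \<le> \<parallel>h\<parallel>\<close> by monotonicity; since \<open>L\<close> maps \<open>B\<^sub>\<real>\<close> to real functions,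
  \<open>L g x = Re (cnj \<omega> L h x) = |L h x|\<close>. So every bound \<open>\<parallel>L g\<parallel>\<^sub>\<infinity> \<le> S \<parallel>g\<parallel>\<close> on \<open>B\<^sub>\<real>\<close>
  carries over to \<open>B\<close>, and the two suprema agree.\<close>

lemma norm_le_supnorm:
  assumes "compact K" "f \<in> CK K" "x \<in> K"
  shows "cmod (f x) \<le> supnorm K f"
proof -
  have "continuous_on K (\<lambda>x. cmod (f x))"
    using assms(2) by (auto simp: CK_def intro: continuous_intros)
  then have "bdd_above ((\<lambda>x. cmod (f x)) ` K)"
    using assms(1) by (intro bounded_imp_bdd_above compact_imp_bounded compact_continuous_image)
  then show ?thesis
    unfolding supnorm_def using assms(3) by (rule cSUP_upper2) simp
qed

lemma CK_nonzero_imp_nonempty: "f \<in> CK K \<Longrightarrow> f \<noteq> (\<lambda>x. 0) \<Longrightarrow> K \<noteq> {}"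
  by (auto simp: CK_def)

lemma supnorm_nonneg: "compact K \<Longrightarrow> K \<noteq> {} \<Longrightarrow> f \<in> CK K \<Longrightarrow> 0 \<le> supnorm K f"
  using norm_le_supnorm norm_ge_zero order_trans by blast

lemma supnorm_le: "K \<noteq> {} \<Longrightarrow> (\<And>x. x \<in> K \<Longrightarrow> cmod (f x) \<le> c) \<Longrightarrow> supnorm K f \<le> c"
  unfolding supnorm_def by (rule cSUP_least)

lemma supnorm_zero: "K \<noteq> {} \<Longrightarrow> supnorm K (\<lambda>x. 0) = 0"
  by (simp add: supnorm_def)

lemma Re_cnj_sgn_mult_self: "Re (cnj (sgn z) * z) = cmod z"
proof (cases "z = 0")
  case False
  have "Re (cnj z * z) = (cmod z)\<^sup>2"
    unfolding cmod_power2 by (simp add: power2_eq_square)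
  with False show ?thesis
    by (simp add: sgn_div_norm power2_eq_square)
qed simp

lemma real_combination_eq_Re_cnj_mult:
  assumes "Im u = 0" "Im v = 0"
  shows "of_real (Re w) * u + of_real (Im w) * v = of_real (Re (cnj w * (u + \<i> * v)))"
  using assms by (simp add: complex_eq_iff)

lemma norm_real_combination_le:
  assumes "Im u = 0" "Im v = 0" "cmod w \<le> 1"
  shows "cmod (of_real (Re w) * u + of_real (Im w) * v) \<le> cmod (u + \<i> * v)"
proof -
  have "cmod (of_real (Re w) * u + of_real (Im w) * v) = \<bar>Re (cnj w * (u + \<i> * v))\<bar>"
    unfolding real_combination_eq_Re_cnj_mult[OF assms(1,2)] by (rule norm_of_real)
  also have "\<dots> \<le> cmod (cnj w * (u + \<i> * v))"
    by (rule abs_Re_le_cmod)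
  also have "\<dots> \<le> cmod (u + \<i> * v)"
    using assms(3) by (simp add: norm_mult mult_left_le_one_le)
  finally show ?thesis .
qed

lemma norm_on_pos: "norm_on B N \<Longrightarrow> f \<in> B \<Longrightarrow> f \<noteq> (\<lambda>x. 0) \<Longrightarrow> 0 < N f"
  unfolding norm_on_def by (metis order_less_le)

lemma norm_on_zero: "norm_on B N \<Longrightarrow> complex_subspace B \<Longrightarrow> N (\<lambda>x. 0) = 0"
  unfolding norm_on_def complex_subspace_def by blast

lemma complex_subspace_combination:
  assumes "complex_subspace B" "f \<in> B" "g \<in> B"
  shows "(\<lambda>x. a * f x + b * g x) \<in> B"
proof -
  have add: "(\<lambda>x. f x + g x) \<in> B" if "f \<in> B" "g \<in> B" for f g
    using assms(1) that unfolding complex_subspace_def by blast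
  have mul: "(\<lambda>x. c * f x) \<in> B" if "f \<in> B" for c f
    using assms(1) that unfolding complex_subspace_def by blast
  show ?thesis
    using add[OF mul[OF assms(2)] mul[OF assms(3)]] by simp
qed

lemma real_part_space_combination:
  assumes "complex_subspace B" "f \<in> real_part_space B" "g \<in> real_part_space B"
  shows "(\<lambda>x. of_real a * f x + of_real b * g x) \<in> real_part_space B"
  using assms complex_subspace_combination unfolding real_part_space_def by auto

lemma real_part_space_nonzero:
  assumes "\<forall>h\<in>B. \<exists>g1\<in>real_part_space B. \<exists>g2\<in>real_part_space B. h = (\<lambda>x. g1 x + \<i> * g2 x)"
    and "h \<in> B" "h \<noteq> (\<lambda>x. 0)"
  shows "real_part_space B - {\<lambda>x. 0} \<noteq> {}"
proof -
  obtain g1 g2 where "g1 \<in> real_part_space B" "g2 \<in> real_part_space B"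
    and "h = (\<lambda>x. g1 x + \<i> * g2 x)"
    using assms(1,2) by blast
  moreover have "g1 \<noteq> (\<lambda>x. 0) \<or> g2 \<noteq> (\<lambda>x. 0)"
    using \<open>h \<noteq> (\<lambda>x. 0)\<close> calculation(3) by auto
  ultimately show ?thesis
    by blast
qed

lemma complex_linear_on_combination:
  assumes "complex_linear_on B L" "complex_subspace B" "f \<in> B" "g \<in> B"
  shows "L (\<lambda>x. a * f x + b * g x) = (\<lambda>x. a * L f x + b * L g x)"
  using assms unfolding complex_linear_on_def complex_subspace_def by simp

lemma complex_linear_on_zero:
  assumes "complex_linear_on B L" "complex_subspace B"
  shows "L (\<lambda>x. 0) = (\<lambda>x. 0)"
  using complex_linear_on_combination[OF assms, of "\<lambda>x. 0" "\<lambda>x. 0" 0 0] assms(2)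
  by (simp add: complex_subspace_def)

lemma supnorm_bound_extends_to_zero:
  assumes "K \<noteq> {}" "complex_subspace B" "norm_on B N" "complex_linear_on B L"
    and "\<forall>g\<in>A - {\<lambda>x. 0}. supnorm K (L g) \<le> S * N g"
  shows "\<forall>g\<in>A. supnorm K (L g) \<le> S * N g"
proof
  fix g assume "g \<in> A"
  show "supnorm K (L g) \<le> S * N g"
  proof (cases "g = (\<lambda>x. 0)")
    case True
    then show ?thesis
      using norm_on_zero[OF assms(3,2)] complex_linear_on_zero[OF assms(4,2)]
      by (simp add: supnorm_zero[OF assms(1)])
  qed (use \<open>g \<in> A\<close> assms(5) in blast)
qed

lemma cSUP_ratio_le_iff:
  fixes F N :: "'b \<Rightarrow> real"
  assumes "A \<noteq> {}" "\<And>h. h \<in> A \<Longrightarrow> 0 < N h" "bdd_above ((\<lambda>h. F h / N h) ` A)"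
  shows "(SUP h\<in>A. F h / N h) \<le> S \<longleftrightarrow> (\<forall>h\<in>A. F h \<le> S * N h)"
  using assms by (simp add: cSUP_le_iff pos_divide_le_eq)

lemma cSUP_ratio_eq_if_bounds_transfer:
  fixes F N :: "'b \<Rightarrow> real"
  assumes "R \<subseteq> A" "R \<noteq> {}"
    and pos: "\<And>h. h \<in> A \<Longrightarrow> 0 < N h" and nonneg: "\<And>h. h \<in> A \<Longrightarrow> 0 \<le> F h"
    and bound: "\<And>h. h \<in> A \<Longrightarrow> F h \<le> C * N h"
    and transfer: "\<And>S. 0 \<le> S \<Longrightarrow> \<forall>g\<in>R. F g \<le> S * N g \<Longrightarrow> \<forall>h\<in>A. F h \<le> S * N h"
  shows "(SUP h\<in>A. F h / N h) = (SUP g\<in>R. F g / N g)"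
proof -
  have "F h / N h \<le> C" if "h \<in> A" for h
    using bound[OF that] pos[OF that] by (simp add: pos_divide_le_eq)
  then have bdd_A: "bdd_above ((\<lambda>h. F h / N h) ` A)"
    by (rule bdd_aboveI2)
  then have bdd_R: "bdd_above ((\<lambda>h. F h / N h) ` R)"
    by (rule bdd_above_mono) (use \<open>R \<subseteq> A\<close> in blast)
  define S where "S = (SUP g\<in>R. F g / N g)"
  have "0 \<le> S"
  proof -
    obtain g where "g \<in> R" using \<open>R \<noteq> {}\<close> by blast
    then have "0 \<le> F g / N g"
      using \<open>R \<subseteq> A\<close> by (intro divide_nonneg_pos nonneg pos) auto
    also have "\<dots> \<le> S"
      unfolding S_def using \<open>g \<in> R\<close> bdd_R by (rule cSUP_upper)
    finally show ?thesis .
  qed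
  moreover have "\<forall>g\<in>R. F g \<le> S * N g"
    using cSUP_ratio_le_iff[OF \<open>R \<noteq> {}\<close> _ bdd_R, of S] \<open>R \<subseteq> A\<close> pos by (auto simp: S_def)
  ultimately have "(SUP h\<in>A. F h / N h) \<le> S"
    using cSUP_ratio_le_iff[OF _ pos bdd_A] transfer \<open>R \<noteq> {}\<close> \<open>R \<subseteq> A\<close> by blast
  moreover have "S \<le> (SUP h\<in>A. F h / N h)"
    unfolding S_def using assms(1,2) bdd_A by (intro cSUP_subset_mono) auto
  ultimately show ?thesis
    unfolding S_def by simp
qed

lemma supnorm_bound_from_real_part_space:
  assumes "compact K" "K \<noteq> {}" "complex_subspace B"
    and decomp: "\<forall>h\<in>B. \<exists>g1\<in>real_part_space B. \<exists>g2\<in>real_part_space B. h = (\<lambda>x. g1 x + \<i> * g2 x)"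
    and "monotone_norm_on K B N" "complex_linear_on B L"
    and "L ` B \<subseteq> CK K" "L ` real_part_space B \<subseteq> CRK K"
    and "0 \<le> S" and real_bound: "\<forall>g\<in>real_part_space B. supnorm K (L g) \<le> S * N g"
    and "h \<in> B"
  shows "supnorm K (L h) \<le> S * N h"
proof (rule supnorm_le[OF \<open>K \<noteq> {}\<close>])
  fix x assume "x \<in> K"
  obtain g1 g2 where g1: "g1 \<in> real_part_space B" and g2: "g2 \<in> real_part_space B"
    and h: "h = (\<lambda>x. g1 x + \<i> * g2 x)"
    using decomp \<open>h \<in> B\<close> by blast
  have "g1 \<in> B" "g2 \<in> B" using g1 g2 by (auto simp: real_part_space_def)
  have L_real: "Im (L g1 y) = 0" "Im (L g2 y) = 0" for y
    using g1 g2 assms(8) by (auto simp: CRK_def)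
  define \<omega> where "\<omega> = sgn (L h x)"
  define g where "g = (\<lambda>y. of_real (Re \<omega>) * g1 y + of_real (Im \<omega>) * g2 y)"
  have g_real: "g \<in> real_part_space B"
    unfolding g_def using assms(3) g1 g2 by (rule real_part_space_combination)
  then have "g \<in> B" by (simp add: real_part_space_def)
  have "L g x = of_real (Re \<omega>) * L g1 x + of_real (Im \<omega>) * L g2 x"
    unfolding g_def complex_linear_on_combination[OF assms(6,3) \<open>g1 \<in> B\<close> \<open>g2 \<in> B\<close>] ..
  also have "\<dots> = of_real (Re (cnj \<omega> * (L g1 x + \<i> * L g2 x)))"
    using L_real by (rule real_combination_eq_Re_cnj_mult)
  also have "L g1 x + \<i> * L g2 x = L h x"
    using complex_linear_on_combination[OF assms(6,3) \<open>g1 \<in> B\<close> \<open>g2 \<in> B\<close>, of 1 \<i>] h by simp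
  also have "Re (cnj \<omega> * L h x) = cmod (L h x)"
    unfolding \<omega>_def by (rule Re_cnj_sgn_mult_self)
  finally have "cmod (L h x) = cmod (L g x)"
    by simp
  also have "\<dots> \<le> supnorm K (L g)"
    using norm_le_supnorm[OF \<open>compact K\<close> _ \<open>x \<in> K\<close>] \<open>g \<in> B\<close> assms(7) by blast
  also have "\<dots> \<le> S * N g"
    using real_bound g_real by blast
  also have "\<dots> \<le> S * N h"
  proof (rule mult_left_mono[OF _ \<open>0 \<le> S\<close>])
    have "cmod (g y) \<le> cmod (h y)" for y
      unfolding g_def h using g1 g2
      by (intro norm_real_combination_le) (auto simp: real_part_space_def \<omega>_def norm_sgn)
    then show "N g \<le> N h"
      using assms(5) \<open>g \<in> B\<close> \<open>h \<in> B\<close> by (simp add: monotone_norm_on_def)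
  qed
  finally show "cmod (L h x) \<le> S * N h" .
qed

theorem lemmaL2:
  fixes K :: "'a::euclidean_space set"
    and B :: "('a \<Rightarrow> complex) set"
    and L :: "('a \<Rightarrow> complex) \<Rightarrow> ('a \<Rightarrow> complex)"
    and N :: "('a \<Rightarrow> complex) \<Rightarrow> real"
  assumes "compact K"
    and "B \<subseteq> CK K" and "complex_subspace B"
    and "\<forall>h\<in>B. \<exists>g1\<in>real_part_space B. \<exists>g2\<in>real_part_space B. h = (\<lambda>x. g1 x + \<i> * g2 x)"
    and "monotone_norm_on K B N"
    and "complex_linear_on B L"
    and "L ` B \<subseteq> CK K" and "L ` real_part_space B \<subseteq> CRK K"
    and "\<exists>C. \<forall>h\<in>B. supnorm K (L h) \<le> C * N h"
  shows "(SUP h\<in>B - {\<lambda>x. 0}. supnorm K (L h) / N h)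
       = (SUP g\<in>real_part_space B - {\<lambda>x. 0}. supnorm K (L g) / N g)"
proof (cases "B - {\<lambda>x. 0} = {}")
  case True
  then have "real_part_space B - {\<lambda>x. 0} = {}"
    by (auto simp: real_part_space_def)
  with True show ?thesis
    by (simp only: image_empty)
next
  case False
  then obtain h0 where "h0 \<in> B" "h0 \<noteq> (\<lambda>x. 0)"
    by blast
  then have "K \<noteq> {}"
    using assms(2) CK_nonzero_imp_nonempty by blast
  have "norm_on B N"
    using assms(5) by (simp add: monotone_norm_on_def)
  obtain C where "\<forall>h\<in>B. supnorm K (L h) \<le> C * N h"
    using assms(9) by blast
  moreover have "\<forall>h\<in>B. supnorm K (L h) \<le> S * N h"
    if "0 \<le> S" and nonzero_bound: "\<forall>g\<in>real_part_space B - {\<lambda>x. 0}. supnorm K (L g) \<le> S * N g"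
    for S
    using supnorm_bound_from_real_part_space[OF assms(1) \<open>K \<noteq> {}\<close> assms(3-8) \<open>0 \<le> S\<close>]
      supnorm_bound_extends_to_zero[OF \<open>K \<noteq> {}\<close> assms(3) \<open>norm_on B N\<close> assms(6) nonzero_bound]
    by blast
  ultimately show ?thesis
    using real_part_space_nonzero[OF assms(4) \<open>h0 \<in> B\<close> \<open>h0 \<noteq> (\<lambda>x. 0)\<close>]
      norm_on_pos[OF \<open>norm_on B N\<close>] supnorm_nonneg[OF assms(1) \<open>K \<noteq> {}\<close>] assms(7)
    by (intro cSUP_ratio_eq_if_bounds_transfer) (auto simp: real_part_space_def)
qed

end
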